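(* Let $r \geq 2$ be an integer, let $\mathcal{F}$ be a collection of $r$-uniform hypergraphs each with at least $t$ vertices, and let $0 < p < 1$. Let $\mathcal{P}^n$ denote the set of $r$-uniform hypergraphs on a fixed $n$-vertex set that contain no induced subgraph isomorphic to a member of $\mathcal{F}$, and let $c = c(p,\mathcal{F})$ be the constant such that \[ \Pr[G(n,p) \in \mathcal{P}^n] = 2^{(-c+o(1))\binom{n}{r}} \quad (n \to \infty). \] Then for every $\epsilon > 0$ there exist $n_0$ and $\delta > 0$ (depending only on $\epsilon$, $p$, $\mathcal{F}$) such that if $\mathcal{A}$ is a collection of $r$-uniform hypergraphs on a common vertex set of size $n > n_0$ with \[ \Pr[G(n,p) \in \mathcal{A}] > 2^{(-c+\epsilon)\binom{n}{r}}, \] then some hypergraph in $\mathcal{A}$ contains at least $\delta n^t$ induced subgraphs each isomorphic to a member of $\mathcal{F}$.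
   Context: $G(n,p)$ denotes the random $r$-uniform hypergraph on $n$ (labelled) vertices in which each $r$-element subset is an edge independently with probability $p$. It is known (Alekseev; Bollobás–Thomason) that for the hereditary property $\mathcal{P}$ of containing no induced member of $\mathcal{F}$, writing $\Pr[G(n,p)\in\mathcal{P}^n] = 2^{-c_n\binom{n}{r}}$, the limit $c(p,\mathcal{F}) = \lim_{n\to\infty} c_n$ exists; this is the constant $c$ above. An induced subgraph of a hypergraph $G$ is $G[S]$ for a vertex subset $S$ (all edges of $G$ contained in $S$); distinct induced subgraphs correspond to distinct vertex subsets. *)

theory Defs
  imports Complex_Main
begin

definition uniform_hg :: "nat \<Rightarrow> 'a set \<Rightarrow> 'a set set \<Rightarrow> bool" where
  "uniform_hg r V E \<longleftrightarrow> finite V \<and> (\<forall>e\<in>E. e \<subseteq> V \<and> card e = r)"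

definition r_sets :: "nat \<Rightarrow> nat \<Rightarrow> nat set set" where
  "r_sets r n = {e. e \<subseteq> {0..<n} \<and> card e = r}"

definition gnp_prob :: "nat \<Rightarrow> nat \<Rightarrow> real \<Rightarrow> nat set set set \<Rightarrow> real" where
  "gnp_prob r n p A =
     (\<Sum>E\<in>{E\<in>Pow (r_sets r n). E \<in> A}. p ^ card E * (1 - p) ^ (card (r_sets r n) - card E))"

definition induced_sub :: "'a set set \<Rightarrow> 'a set \<Rightarrow> 'a set set" where
  "induced_sub E S = {e\<in>E. e \<subseteq> S}"

definition hg_iso :: "'a set \<Rightarrow> 'a set set \<Rightarrow> 'b set \<Rightarrow> 'b set set \<Rightarrow> bool" where
  "hg_iso V1 E1 V2 E2 \<longleftrightarrow> (\<exists>f. bij_betw f V1 V2 \<and> (\<lambda>e. f ` e) ` E1 = E2)"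

definition induced_copy :: "(nat set \<times> nat set set) set \<Rightarrow> 'a set set \<Rightarrow> 'a set \<Rightarrow> bool" where
  "induced_copy F E S \<longleftrightarrow> (\<exists>(V, H)\<in>F. hg_iso S (induced_sub E S) V H)"

definition induced_copies :: "(nat set \<times> nat set set) set \<Rightarrow> nat \<Rightarrow> nat set set \<Rightarrow> nat set set" where
  "induced_copies F n E = {S. S \<subseteq> {0..<n} \<and> induced_copy F E S}"

definition free_family :: "nat \<Rightarrow> (nat set \<times> nat set set) set \<Rightarrow> nat \<Rightarrow> nat set set set" where
  "free_family r F n = {E\<in>Pow (r_sets r n). induced_copies F n E = {}}"

definition c_seq :: "nat \<Rightarrow> real \<Rightarrow> (nat set \<times> nat set set) set \<Rightarrow> nat \<Rightarrow> real" where
  "c_seq r p F n = - log 2 (gnp_prob r n p (free_family r F n)) / real (n choose r)"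

end

theory Submission
  imports Defs "HOL-Analysis.Convex" "HOL-Library.Ramsey"
begin

text \<open>Fix a large k and call a k-set S copy-free for E if E[S] has no induced copy of a member
  of F. In G(n,p) each such event has probability q = Pr[G(k,p) \<in> P^k] = 2^(-c_k binom(k,r)) and
  depends only on the edges inside S, and every r-set lies in exactly m = binom(n-r,k-r) of the
  k-sets. Finner's generalisation of Hoelder's inequality to product measures therefore bounds the
  probability that a (1 - \<eta>)-fraction of all k-sets is copy-free by
  2^(binom(n,k)/m) q^((1-\<eta>) binom(n,k)/m) = 2^((1/binom(k,r) - (1-\<eta>) c_k) binom(n,r)), which is below
  2^((-c+\<epsilon>) binom(n,r)) for k large and \<eta> small. So some E \<in> A has more than \<eta> binom(n,k)
  k-sets containing an induced copy; as a copy with at least t vertices lies in at most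
  binom(n-t,k-t) k-sets, E has at least \<delta> n^t induced copies.\<close>

section \<open>Random subsets\<close>

definition subset_weight :: "real \<Rightarrow> 'a set \<Rightarrow> 'a set \<Rightarrow> real" where
  "subset_weight p I E = p ^ card E * (1 - p) ^ card (I - E)"

definition expect_subset :: "real \<Rightarrow> 'a set \<Rightarrow> ('a set \<Rightarrow> real) \<Rightarrow> real" where
  "expect_subset p I g = (\<Sum>E\<in>Pow I. subset_weight p I E * g E)"

definition depends_only_on :: "('a set \<Rightarrow> 'b) \<Rightarrow> 'a set \<Rightarrow> bool" where
  "depends_only_on g T \<longleftrightarrow> (\<forall>E. g E = g (E \<inter> T))"

lemma expect_subset_empty [simp]: "expect_subset p {} g = g {}"
  by (simp add: expect_subset_def subset_weight_def)

lemma expect_subset_insert: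
  assumes "finite I" "x \<notin> I"
  shows "expect_subset p (insert x I) g = expect_subset p I (\<lambda>E. p * g (insert x E) + (1 - p) * g E)"
proof -
  have disj: "Pow I \<inter> insert x ` Pow I = {}" using assms by auto
  have inj: "inj_on (insert x) (Pow I)"
    using assms unfolding inj_on_def by (metis PowD insert_ident subsetD)
  have weight_in: "subset_weight p (insert x I) (insert x E) = p * subset_weight p I E"
    if "E \<subseteq> I" for E
  proof -
    have "insert x I - insert x E = I - E" using assms by auto
    moreover have "finite E" "x \<notin> E" using that assms finite_subset by auto
    ultimately show ?thesis by (simp add: subset_weight_def)
  qed
  have weight_out: "subset_weight p (insert x I) E = (1 - p) * subset_weight p I E" if "E \<subseteq> I" for E
  proof -
    have "insert x I - E = insert x (I - E)" using that assms by auto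
    then show ?thesis using that assms by (simp add: subset_weight_def)
  qed
  have "expect_subset p (insert x I) g
      = (\<Sum>E\<in>Pow I. subset_weight p (insert x I) E * g E)
        + (\<Sum>E\<in>Pow I. subset_weight p (insert x I) (insert x E) * g (insert x E))"
    unfolding expect_subset_def Pow_insert using assms disj inj
    by (simp add: sum.union_disjoint sum.reindex)
  also have "\<dots> = (\<Sum>E\<in>Pow I. subset_weight p I E * (p * g (insert x E) + (1 - p) * g E))"
    by (simp add: weight_in weight_out sum.distrib[symmetric] algebra_simps)
  finally show ?thesis unfolding expect_subset_def .
qed

lemma expect_subset_cong:
  "(\<And>E. E \<subseteq> I \<Longrightarrow> g E = h E) \<Longrightarrow> expect_subset p I g = expect_subset p I h"
  unfolding expect_subset_def by (intro sum.cong) auto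

lemma expect_subset_mono:
  assumes "0 \<le> p" "p \<le> 1" "\<And>E. E \<subseteq> I \<Longrightarrow> g E \<le> h E"
  shows "expect_subset p I g \<le> expect_subset p I h"
  unfolding expect_subset_def using assms
  by (intro sum_mono mult_left_mono) (auto simp: subset_weight_def)

lemma expect_subset_nonneg:
  assumes "0 \<le> p" "p \<le> 1" "\<And>E. E \<subseteq> I \<Longrightarrow> 0 \<le> g E"
  shows "0 \<le> expect_subset p I g"
  unfolding expect_subset_def using assms
  by (intro sum_nonneg mult_nonneg_nonneg) (auto simp: subset_weight_def)

lemma expect_subset_add:
  "expect_subset p I (\<lambda>E. g E + h E) = expect_subset p I g + expect_subset p I h"
  unfolding expect_subset_def by (simp add: distrib_left sum.distrib)

lemma expect_subset_cmult:
  "expect_subset p I (\<lambda>E. a * g E) = a * expect_subset p I g"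
  unfolding expect_subset_def by (simp add: sum_distrib_left algebra_simps)

lemma expect_subset_const:
  assumes "finite I" shows "expect_subset p I (\<lambda>_. a) = a"
  using assms by (induction I rule: finite_induct) (simp_all add: expect_subset_insert algebra_simps)

lemma depends_only_on_insert:
  "depends_only_on g T \<Longrightarrow> x \<notin> T \<Longrightarrow> g (insert x E) = g E"
  unfolding depends_only_on_def by (metis Int_insert_left)

lemma depends_only_on_Diff:
  assumes "depends_only_on g T"
  shows "depends_only_on (\<lambda>E. h (g (insert x E)) (g (E - {x}))) (T - {x})"
proof -
  have "insert x E \<inter> T = insert x (E \<inter> (T - {x})) \<inter> T"
    "(E - {x}) \<inter> T = (E \<inter> (T - {x}) - {x}) \<inter> T" for E
    by auto
  then show ?thesis using assms unfolding depends_only_on_def by metis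
qed

lemma expect_subset_Int:
  assumes "finite I" "depends_only_on g T"
  shows "expect_subset p I g = expect_subset p (I \<inter> T) g"
  using assms
proof (induction I arbitrary: g rule: finite_induct)
  case empty then show ?case by simp
next
  case (insert x I)
  show ?case
  proof (cases "x \<in> T")
    case True
    have "depends_only_on (\<lambda>E. p * g (insert x E) + (1 - p) * g E) T"
      using insert.prems True unfolding depends_only_on_def by (metis Int_insert_left_if1)
    then show ?thesis using insert True
      by (simp add: expect_subset_insert)
  next
    case False
    then show ?thesis using insert depends_only_on_insert[OF insert.prems False]
      by (simp add: expect_subset_insert algebra_simps)
  qed
qed

lemma expect_subset_bij_image:
  assumes bij: "bij_betw \<psi> T T'" and "finite T"
  shows "expect_subset p T (\<lambda>E. h (\<psi> ` E)) = expect_subset p T' h"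
proof -
  have inj: "inj_on \<psi> T" using bij bij_betw_def by blast
  have "subset_weight p T' (\<psi> ` E) = subset_weight p T E" if "E \<subseteq> T" for E
  proof -
    have "T' - \<psi> ` E = \<psi> ` (T - E)" using bij that unfolding bij_betw_def inj_on_def by blast
    then show ?thesis using inj that unfolding subset_weight_def
      by (metis Diff_subset card_image inj_on_subset)
  qed
  then show ?thesis unfolding expect_subset_def
    using sum.reindex_bij_betw[OF bij_betw_Pow[OF bij]] by (metis (no_types, lifting) PowD sum.cong)
qed

lemma r_sets_eq_nsets: "r_sets r n = nsets {0..<n} r"
  unfolding r_sets_def nsets_def using finite_subset by auto

lemma finite_r_sets [simp]: "finite (r_sets r n)"
  by (simp add: r_sets_eq_nsets finite_imp_finite_nsets)

lemma gnp_prob_eq_expect_subset: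
  "gnp_prob r n p A = expect_subset p (r_sets r n) (\<lambda>E. of_bool (E \<in> A))"
proof -
  have "card (r_sets r n - E) = card (r_sets r n) - card E" if "E \<subseteq> r_sets r n" for E
    using that by (simp add: card_Diff_subset finite_subset)
  then show ?thesis
    unfolding gnp_prob_def expect_subset_def subset_weight_def
    by (simp add: sum.inter_filter[symmetric] of_bool_def if_distrib cong: if_cong)
qed

lemma gnp_prob_nonneg: "0 \<le> p \<Longrightarrow> p \<le> 1 \<Longrightarrow> 0 \<le> gnp_prob r n p A"
  unfolding gnp_prob_eq_expect_subset by (rule expect_subset_nonneg) auto

lemma gnp_prob_le_1: "0 \<le> p \<Longrightarrow> p \<le> 1 \<Longrightarrow> gnp_prob r n p A \<le> 1"
  unfolding gnp_prob_eq_expect_subset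
  using expect_subset_mono[of p "r_sets r n" _ "\<lambda>_. 1"] by (simp add: expect_subset_const)

section \<open>The inequalities of Hoelder and Finner\<close>

lemma prod_le_sum_power_div_card:
  fixes a :: "'b \<Rightarrow> real"
  assumes J: "finite J" "card J = m" "0 < m" and a: "\<And>j. j \<in> J \<Longrightarrow> 0 \<le> a j"
  shows "(\<Prod>j\<in>J. a j) \<le> (\<Sum>j\<in>J. a j ^ m) / m"
proof -
  have "J \<noteq> {}" using J by auto
  have "(\<Prod>j\<in>J. a j) = root m ((\<Prod>j\<in>J. a j) ^ m)"
    using J a by (simp add: real_root_power_cancel prod_nonneg)
  also have "\<dots> = (\<Prod>j\<in>J. a j ^ m) powr (1 / card J)"
    using J a by (simp add: root_powr_inverse prod_power_distrib prod_nonneg)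
  also have "\<dots> \<le> (\<Sum>j\<in>J. a j ^ m / card J)"
    using arith_geom_mean[OF J(1) \<open>J \<noteq> {}\<close>] a by simp
  also have "\<dots> = (\<Sum>j\<in>J. a j ^ m) / m"
    using J by (simp add: sum_divide_distrib)
  finally show ?thesis .
qed

lemma holder_two_point_normalized:
  fixes a b :: "'b \<Rightarrow> real"
  assumes J: "finite J" "card J = m" "0 < m" and p: "0 \<le> p" "p \<le> 1"
    and a: "\<And>j. j \<in> J \<Longrightarrow> 0 \<le> a j" and b: "\<And>j. j \<in> J \<Longrightarrow> 0 \<le> b j"
    and normalized: "\<And>j. j \<in> J \<Longrightarrow> p * a j ^ m + (1 - p) * b j ^ m = 1"
  shows "p * (\<Prod>j\<in>J. a j) + (1 - p) * (\<Prod>j\<in>J. b j) \<le> 1"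
proof -
  have "p * (\<Prod>j\<in>J. a j) + (1 - p) * (\<Prod>j\<in>J. b j)
      \<le> p * ((\<Sum>j\<in>J. a j ^ m) / m) + (1 - p) * ((\<Sum>j\<in>J. b j ^ m) / m)"
    using J p a b by (intro add_mono mult_left_mono prod_le_sum_power_div_card) auto
  also have "\<dots> = (\<Sum>j\<in>J. p * a j ^ m + (1 - p) * b j ^ m) / m"
    by (simp add: sum.distrib sum_distrib_left add_divide_distrib)
  also have "\<dots> = 1"
    using normalized J by simp
  finally show ?thesis .
qed

lemma holder_two_point:
  fixes a b :: "'b \<Rightarrow> real"
  assumes J: "finite J" "card J = m" "0 < m" and p: "0 \<le> p" "p \<le> 1"
    and a: "\<And>j. j \<in> J \<Longrightarrow> 0 \<le> a j" and b: "\<And>j. j \<in> J \<Longrightarrow> 0 \<le> b j"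
  shows "p * (\<Prod>j\<in>J. a j) + (1 - p) * (\<Prod>j\<in>J. b j)
           \<le> (\<Prod>j\<in>J. root m (p * a j ^ m + (1 - p) * b j ^ m))"
proof -
  define R where "R j = root m (p * a j ^ m + (1 - p) * b j ^ m)" for j
  have R_nonneg: "0 \<le> R j" if "j \<in> J" for j
    using that p a b unfolding R_def by (simp add: real_root_ge_zero)
  have R_pow: "R j ^ m = p * a j ^ m + (1 - p) * b j ^ m" if "j \<in> J" for j
    using that p a b J(3) unfolding R_def by simp
  show ?thesis
  proof (cases "\<exists>j\<in>J. R j = 0")
    case True
    then obtain j where j: "j \<in> J" "R j = 0" by blast
    have "0 \<le> p * a j ^ m" "0 \<le> (1 - p) * b j ^ m"
      using p a[OF j(1)] b[OF j(1)] by simp_all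
    moreover have "p * a j ^ m + (1 - p) * b j ^ m = 0"
      using R_pow[OF j(1)] j(2) J(3) by (simp add: zero_power)
    ultimately have "p * a j ^ m = 0" "(1 - p) * b j ^ m = 0" by linarith+
    then have "p * (\<Prod>j\<in>J. a j) = 0" "(1 - p) * (\<Prod>j\<in>J. b j) = 0"
      using j(1) J(1) by (auto simp: prod_zero_iff)
    moreover have "0 \<le> (\<Prod>j\<in>J. R j)"
      using R_nonneg by (auto intro: prod_nonneg)
    ultimately show ?thesis unfolding R_def by linarith
  next
    case False
    then have R_pos: "0 < R j" if "j \<in> J" for j
      using R_nonneg that by (simp add: order_less_le)
    have le_1: "p * (\<Prod>j\<in>J. a j / R j) + (1 - p) * (\<Prod>j\<in>J. b j / R j) \<le> 1"
    proof (rule holder_two_point_normalized[OF J p])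
      show "p * (a j / R j) ^ m + (1 - p) * (b j / R j) ^ m = 1" if "j \<in> J" for j
      proof -
        have "R j ^ m \<noteq> 0" using R_pos[OF that] by simp
        then show ?thesis using R_pow[OF that]
          by (simp add: power_divide add_divide_distrib[symmetric])
      qed
    qed (use a b R_pos in \<open>auto intro: divide_nonneg_pos\<close>)
    have "(\<Prod>j\<in>J. a j) = (\<Prod>j\<in>J. a j / R j) * (\<Prod>j\<in>J. R j)"
         "(\<Prod>j\<in>J. b j) = (\<Prod>j\<in>J. b j / R j) * (\<Prod>j\<in>J. R j)"
      using R_pos by (auto simp: prod.distrib[symmetric] less_imp_neq[symmetric] intro!: prod.cong)
    then have "p * (\<Prod>j\<in>J. a j) + (1 - p) * (\<Prod>j\<in>J. b j)
        = (p * (\<Prod>j\<in>J. a j / R j) + (1 - p) * (\<Prod>j\<in>J. b j / R j)) * (\<Prod>j\<in>J. R j)"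
      by (simp add: algebra_simps)
    also have "\<dots> \<le> (\<Prod>j\<in>J. R j)"
      using mult_right_mono[OF le_1] R_nonneg by (simp add: prod_nonneg)
    finally show ?thesis unfolding R_def .
  qed
qed

lemma holder_two_point_subset:
  fixes a b :: "'b \<Rightarrow> real"
  assumes J: "finite J" "J' \<subseteq> J" "card J' = m" "0 < m" and p: "0 \<le> p" "p \<le> 1"
    and a: "\<And>j. j \<in> J \<Longrightarrow> 0 \<le> a j" and b: "\<And>j. j \<in> J \<Longrightarrow> 0 \<le> b j"
    and eq: "\<And>j. j \<in> J - J' \<Longrightarrow> a j = b j"
  shows "p * (\<Prod>j\<in>J. a j) + (1 - p) * (\<Prod>j\<in>J. b j)
           \<le> (\<Prod>j\<in>J. root m (p * a j ^ m + (1 - p) * b j ^ m))"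
proof -
  have split: "(\<Prod>j\<in>J. g j) = (\<Prod>j\<in>J - J'. g j) * (\<Prod>j\<in>J'. g j)" for g :: "'b \<Rightarrow> real"
    using prod.subset_diff[OF J(2,1)] .
  let ?root = "\<lambda>j. root m (p * a j ^ m + (1 - p) * b j ^ m)"
  have "(\<Prod>j\<in>J - J'. ?root j) = (\<Prod>j\<in>J - J'. b j)"
    using eq b J(4) by (intro prod.cong) (auto simp: algebra_simps real_root_power_cancel)
  moreover have "(\<Prod>j\<in>J - J'. a j) = (\<Prod>j\<in>J - J'. b j)"
    using eq by (rule prod.cong[OF refl])
  ultimately have "p * (\<Prod>j\<in>J. a j) + (1 - p) * (\<Prod>j\<in>J. b j)
      = (p * (\<Prod>j\<in>J'. a j) + (1 - p) * (\<Prod>j\<in>J'. b j)) * (\<Prod>j\<in>J - J'. b j)"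
    "(\<Prod>j\<in>J. ?root j) = (\<Prod>j\<in>J'. ?root j) * (\<Prod>j\<in>J - J'. b j)"
    unfolding split[of a] split[of b] split[of ?root] by (simp_all add: algebra_simps)
  moreover have "p * (\<Prod>j\<in>J'. a j) + (1 - p) * (\<Prod>j\<in>J'. b j) \<le> (\<Prod>j\<in>J'. ?root j)"
    using J p a b by (intro holder_two_point) (auto intro: finite_subset)
  moreover have "0 \<le> (\<Prod>j\<in>J - J'. b j)"
    using b by (auto intro: prod_nonneg)
  ultimately show ?thesis by (simp add: mult_right_mono)
qed

lemma finner_inequality:
  fixes f :: "'b \<Rightarrow> 'a set \<Rightarrow> real" and T :: "'b \<Rightarrow> 'a set"
  assumes p: "0 \<le> p" "p \<le> 1" and "finite I" and J: "finite J" and m: "0 < m"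
    and cover: "\<And>i. i \<in> I \<Longrightarrow> card {j\<in>J. i \<in> T j} = m"
    and nonneg: "\<And>j E. j \<in> J \<Longrightarrow> 0 \<le> f j E"
    and dep: "\<And>j. j \<in> J \<Longrightarrow> depends_only_on (f j) (T j)"
  shows "expect_subset p I (\<lambda>E. \<Prod>j\<in>J. f j E)
           \<le> (\<Prod>j\<in>J. root m (expect_subset p I (\<lambda>E. f j E ^ m)))"
  using \<open>finite I\<close> cover nonneg dep
proof (induction I arbitrary: T f rule: finite_induct)
  case empty
  then show ?case using m by (simp add: real_root_power_cancel)
next
  case (insert x I)
  \<comment> \<open>Evaluating at E - {x} rather than E makes g j independent of x,
    so that it depends only on T j - {x}.\<close>
  define g where "g j E = root m (p * f j (insert x E) ^ m + (1 - p) * f j (E - {x}) ^ m)" for j E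
  have g_pow: "g j E ^ m = p * f j (insert x E) ^ m + (1 - p) * f j E ^ m"
    if "j \<in> J" "E \<subseteq> I" for j E
  proof -
    have "E - {x} = E" using that insert.hyps by auto
    then show ?thesis using that p m insert.prems(2) unfolding g_def by simp
  qed
  have pointwise:
    "p * (\<Prod>j\<in>J. f j (insert x E)) + (1 - p) * (\<Prod>j\<in>J. f j E) \<le> (\<Prod>j\<in>J. g j E)"
    if "E \<subseteq> I" for E
  proof -
    have "E - {x} = E" using that insert.hyps by auto
    moreover have "f j (insert x E) = f j E" if "j \<in> J - {j\<in>J. x \<in> T j}" for j
      using that insert.prems(3) by (auto intro: depends_only_on_insert)
    ultimately show ?thesis
      using insert.prems J m p unfolding g_def \<open>E - {x} = E\<close>
      by (intro holder_two_point_subset[where J' = "{j\<in>J. x \<in> T j}"]) auto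
  qed
  have IH: "expect_subset p I (\<lambda>E. \<Prod>j\<in>J. g j E)
      \<le> (\<Prod>j\<in>J. root m (expect_subset p I (\<lambda>E. g j E ^ m)))"
  proof (rule insert.IH[where T = "\<lambda>j. T j - {x}"])
    show "card {j\<in>J. i \<in> T j - {x}} = m" if "i \<in> I" for i
    proof -
      have "i \<noteq> x" using that insert.hyps by auto
      then show ?thesis using that insert.prems(1)[of i] by simp
    qed
    show "0 \<le> g j E" if "j \<in> J" for j E
      using that p insert.prems(2) unfolding g_def by (simp add: real_root_ge_zero)
    show "depends_only_on (g j) (T j - {x})" if "j \<in> J" for j
      unfolding g_def by (rule depends_only_on_Diff[OF insert.prems(3)[OF that]])
  qed
  have "expect_subset p (insert x I) (\<lambda>E. \<Prod>j\<in>J. f j E)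
      = expect_subset p I (\<lambda>E. p * (\<Prod>j\<in>J. f j (insert x E)) + (1 - p) * (\<Prod>j\<in>J. f j E))"
    by (rule expect_subset_insert[OF insert.hyps])
  also have "\<dots> \<le> expect_subset p I (\<lambda>E. \<Prod>j\<in>J. g j E)"
    using p pointwise by (rule expect_subset_mono)
  also have "\<dots> \<le> (\<Prod>j\<in>J. root m (expect_subset p I (\<lambda>E. g j E ^ m)))"
    by (rule IH)
  also have "\<dots> = (\<Prod>j\<in>J. root m (expect_subset p (insert x I) (\<lambda>E. f j E ^ m)))"
    using g_pow by (intro prod.cong refl arg_cong[where f = "root m"])
      (simp add: expect_subset_insert[OF insert.hyps] cong: expect_subset_cong)
  finally show ?case .
qed

section \<open>Induced copies\<close>

definition copy_free :: "(nat set \<times> nat set set) set \<Rightarrow> 'a set set \<Rightarrow> 'a set \<Rightarrow> bool" where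
  "copy_free F E S \<longleftrightarrow> (\<forall>U\<subseteq>S. \<not> induced_copy F E U)"

lemma induced_copies_eq_empty_iff: "induced_copies F n E = {} \<longleftrightarrow> copy_free F E {0..<n}"
  unfolding induced_copies_def copy_free_def by auto

lemma depends_only_on_copy_free: "depends_only_on (\<lambda>E. h (copy_free F E S)) (Pow S)"
proof -
  have "induced_sub (E \<inter> Pow S) U = induced_sub E U" if "U \<subseteq> S" for E U
    using that unfolding induced_sub_def by auto
  then show ?thesis unfolding depends_only_on_def copy_free_def induced_copy_def by auto
qed

lemma hg_iso_image:
  assumes inj: "inj_on \<phi> U" and X: "\<forall>e\<in>X. e \<subseteq> U"
  shows "hg_iso (\<phi> ` U) ((`) \<phi> ` X) V H \<longleftrightarrow> hg_iso U X V H"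
proof
  assume "hg_iso (\<phi> ` U) ((`) \<phi> ` X) V H"
  then obtain g where g: "bij_betw g (\<phi> ` U) V" "(`) g ` (`) \<phi> ` X = H"
    unfolding hg_iso_def by blast
  have "bij_betw (g \<circ> \<phi>) U V"
    using bij_betw_trans[OF inj_on_imp_bij_betw[OF inj] g(1)] .
  moreover have "(`) (g \<circ> \<phi>) ` X = H"
    using g(2) by (simp add: image_image image_comp)
  ultimately show "hg_iso U X V H" unfolding hg_iso_def by blast
next
  assume "hg_iso U X V H"
  then obtain f where f: "bij_betw f U V" "(`) f ` X = H"
    unfolding hg_iso_def by blast
  define \<psi> where "\<psi> = the_inv_into U \<phi>"
  have "bij_betw (f \<circ> \<psi>) (\<phi> ` U) V"
    unfolding \<psi>_def using bij_betw_the_inv_into[OF inj_on_imp_bij_betw[OF inj]] f(1)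
    by (rule bij_betw_trans)
  moreover have "(f \<circ> \<psi>) ` \<phi> ` e = f ` e" if "e \<in> X" for e
    using that X inj by (auto simp: \<psi>_def image_comp the_inv_into_f_f subset_iff)
  then have "(`) (f \<circ> \<psi>) ` (`) \<phi> ` X = H"
    using f(2) by (simp add: image_image cong: image_cong)
  ultimately show "hg_iso (\<phi> ` U) ((`) \<phi> ` X) V H" unfolding hg_iso_def by blast
qed

lemma induced_copy_image:
  assumes inj: "inj_on \<phi> S" and E: "\<forall>e\<in>E. e \<subseteq> S" and U: "U \<subseteq> S"
  shows "induced_copy F ((`) \<phi> ` E) (\<phi> ` U) \<longleftrightarrow> induced_copy F E U"
proof -
  have "\<phi> ` e \<subseteq> \<phi> ` U \<longleftrightarrow> e \<subseteq> U" if "e \<subseteq> S" for e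
    using that U inj_on_image_mem_iff[OF inj] by blast
  then have "induced_sub ((`) \<phi> ` E) (\<phi> ` U) = (`) \<phi> ` induced_sub E U"
    using E unfolding induced_sub_def by auto
  moreover have "hg_iso (\<phi> ` U) ((`) \<phi> ` induced_sub E U) V H \<longleftrightarrow> hg_iso U (induced_sub E U) V H"
    for V :: "nat set" and H :: "nat set set"
    using inj_on_subset[OF inj U] by (rule hg_iso_image) (auto simp: induced_sub_def)
  ultimately show ?thesis
    unfolding induced_copy_def by (intro bex_cong refl) (simp split: prod.splits)
qed

lemma copy_free_image:
  assumes bij: "bij_betw \<phi> S T" and E: "\<forall>e\<in>E. e \<subseteq> S"
  shows "copy_free F ((`) \<phi> ` E) T \<longleftrightarrow> copy_free F E S"
proof -
  have inj: "inj_on \<phi> S" and T: "T = \<phi> ` S" using bij by (auto simp: bij_betw_def)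
  have "copy_free F ((`) \<phi> ` E) T \<longleftrightarrow> (\<forall>U\<subseteq>S. \<not> induced_copy F ((`) \<phi> ` E) (\<phi> ` U))"
    unfolding copy_free_def T subset_image_iff by blast
  also have "\<dots> \<longleftrightarrow> copy_free F E S"
    unfolding copy_free_def using induced_copy_image[OF inj E] by blast
  finally show ?thesis .
qed

lemma expect_subset_copy_free:
  assumes S: "S \<subseteq> {0..<n}" "card S = k"
  shows "expect_subset p (r_sets r n) (\<lambda>E. of_bool (copy_free F E S))
           = gnp_prob r k p (free_family r F k)"
proof -
  have "finite S" using S(1) finite_subset by blast
  then obtain \<phi> where \<phi>: "bij_betw \<phi> S {0..<k}"
    using ex_bij_betw_finite_nat S(2) by blast
  have "r_sets r n \<inter> Pow S = nsets S r"
    using S(1) by (auto simp: r_sets_eq_nsets nsets_def)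
  then have "expect_subset p (r_sets r n) (\<lambda>E. of_bool (copy_free F E S))
      = expect_subset p (nsets S r) (\<lambda>E. of_bool (copy_free F E S))"
    using expect_subset_Int[OF finite_r_sets depends_only_on_copy_free] by simp
  also have "\<dots> = expect_subset p (nsets S r) (\<lambda>E. of_bool ((`) \<phi> ` E \<in> free_family r F k))"
  proof (rule expect_subset_cong)
    fix E assume E: "E \<subseteq> nsets S r"
    then have "(`) \<phi> ` E \<subseteq> r_sets r k"
      using bij_betw_nsets[OF \<phi>, of r] by (auto simp: r_sets_eq_nsets bij_betw_def)
    moreover have "\<forall>e\<in>E. e \<subseteq> S" using E by (auto simp: nsets_def)
    ultimately show "of_bool (copy_free F E S) = of_bool ((`) \<phi> ` E \<in> free_family r F k)"
      using copy_free_image[OF \<phi>] by (simp add: free_family_def induced_copies_eq_empty_iff)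
  qed
  also have "\<dots> = expect_subset p (r_sets r k) (\<lambda>E. of_bool (E \<in> free_family r F k))"
    using expect_subset_bij_image[OF bij_betw_nsets[OF \<phi>]] \<open>finite S\<close>
    by (simp add: r_sets_eq_nsets finite_imp_finite_nsets)
  finally show ?thesis by (simp add: gnp_prob_eq_expect_subset)
qed

section \<open>Counting k-sets\<close>

lemma card_nsets_supersets:
  assumes A: "finite A" and C: "C \<subseteq> A" "card C \<le> k"
  shows "card {S \<in> nsets A k. C \<subseteq> S} = (card A - card C) choose (k - card C)"
proof -
  have fin_C: "finite C" using A C(1) finite_subset by blast
  have "bij_betw (\<lambda>S. S - C) {S \<in> nsets A k. C \<subseteq> S} (nsets (A - C) (k - card C))"
  proof (rule bij_betw_byWitness[where f' = "\<lambda>T. T \<union> C"])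
    show "(\<lambda>S. S - C) ` {S \<in> nsets A k. C \<subseteq> S} \<subseteq> nsets (A - C) (k - card C)"
      using fin_C by (auto simp: nsets_def card_Diff_subset)
    have "card (T \<union> C) = card T + card C" if "T \<subseteq> A - C" "finite T" for T
      using that fin_C by (intro card_Un_disjoint) auto
    then show "(\<lambda>T. T \<union> C) ` nsets (A - C) (k - card C) \<subseteq> {S \<in> nsets A k. C \<subseteq> S}"
      using fin_C C by (auto simp: nsets_def)
  qed (auto simp: nsets_def)
  then have "card {S \<in> nsets A k. C \<subseteq> S} = card (A - C) choose (k - card C)"
    by (simp add: bij_betw_same_card)
  then show ?thesis using C(1) fin_C by (simp add: card_Diff_subset)
qed

lemma card_not_copy_free_le:
  assumes F: "\<And>V H. (V, H) \<in> F \<Longrightarrow> t \<le> card V" and "t \<le> k"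
  shows "card {S \<in> nsets {0..<n} k. \<not> copy_free F E S}
           \<le> card (induced_copies F n E) * ((n - t) choose (k - t))"
proof -
  let ?K = "nsets {0..<n} k" and ?C = "induced_copies F n E"
  have fin_C: "finite ?C"
    unfolding induced_copies_def by (rule finite_subset[of _ "Pow {0..<n}"]) auto
  have fin_K: "finite ?K" by (simp add: finite_imp_finite_nsets)
  have "{S \<in> ?K. \<not> copy_free F E S} \<subseteq> (\<Union>C\<in>?C. {S \<in> ?K. C \<subseteq> S})"
    unfolding copy_free_def induced_copies_def nsets_def by blast
  then have "card {S \<in> ?K. \<not> copy_free F E S} \<le> card (\<Union>C\<in>?C. {S \<in> ?K. C \<subseteq> S})"
    by (intro card_mono finite_subset[OF _ fin_K]) auto
  also have "\<dots> \<le> (\<Sum>C\<in>?C. card {S \<in> ?K. C \<subseteq> S})"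
    using fin_C by (rule card_UN_le)
  also have "\<dots> \<le> (\<Sum>C\<in>?C. (n - t) choose (k - t))"
  proof (rule sum_mono)
    fix C assume C: "C \<in> ?C"
    then obtain V H where "(V, H) \<in> F" "hg_iso C (induced_sub E C) V H"
      unfolding induced_copies_def induced_copy_def by auto
    then have "t \<le> card C"
      using F unfolding hg_iso_def by (metis bij_betw_same_card)
    then obtain C' where C': "C' \<subseteq> C" "card C' = t"
      by (meson obtain_subset_with_card_n)
    have "C \<subseteq> {0..<n}" using C unfolding induced_copies_def by auto
    have "card {S \<in> ?K. C \<subseteq> S} \<le> card {S \<in> ?K. C' \<subseteq> S}"
      using fin_K C'(1) by (intro card_mono) auto
    also have "\<dots> = (n - t) choose (k - t)"
      using card_nsets_supersets[of "{0..<n}" C' k] C' \<open>C \<subseteq> {0..<n}\<close> \<open>t \<le> k\<close> by auto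
    finally show "card {S \<in> ?K. C \<subseteq> S} \<le> (n - t) choose (k - t)" .
  qed
  finally show ?thesis by simp
qed

lemma binomial_diff_mult_pow_le:
  assumes "t \<le> k" "k \<le> n"
  shows "real ((n - t) choose (k - t)) * real n ^ t \<le> (real k * real t) ^ t * real (n choose k)"
proof (cases "t = 0")
  case True then show ?thesis by simp
next
  case False
  define B where "B = real ((n - t) choose (k - t))"
  define N where "N = real (n choose k)"
  have "B * real (n choose t) = N * real (k choose t)"
    unfolding B_def N_def using choose_mult[OF assms] by (metis mult.commute of_nat_mult)
  have "B * real n ^ t = real t ^ t * (B * (real n / real t) ^ t)"
    using False by (simp add: power_divide)
  also have "\<dots> \<le> real t ^ t * (B * real (n choose t))"
    using binomial_ge_n_over_k_pow_k[of t n] assms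
    by (intro mult_left_mono) (auto simp: B_def)
  also have "\<dots> = real t ^ t * (N * real (k choose t))"
    using \<open>B * real (n choose t) = N * real (k choose t)\<close> by simp
  also have "\<dots> \<le> real t ^ t * (N * real k ^ t)"
    using binomial_le_pow[of t k] assms(1)
    by (intro mult_left_mono) (auto simp: N_def simp flip: of_nat_power)
  also have "\<dots> = (real k * real t) ^ t * N"
    by (simp add: power_mult_distrib)
  finally show ?thesis unfolding B_def N_def .
qed

lemma card_copy_free_ge:
  assumes F: "\<And>V H. (V, H) \<in> F \<Longrightarrow> t \<le> card V" and tk: "t \<le> k" "k \<le> n" and "0 \<le> \<eta>"
    and few: "real (card (induced_copies F n E)) \<le> \<eta> / (real k * real t) ^ t * real n ^ t"
  shows "(1 - \<eta>) * real (n choose k) \<le> real (card {S \<in> nsets {0..<n} k. copy_free F E S})"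
proof -
  let ?K = "nsets {0..<n} k" and ?B = "real ((n - t) choose (k - t))"
  define X where "X = (real k * real t) ^ t"
  have "X \<noteq> 0"
    using tk by (cases "t = 0") (auto simp: X_def)
  have "real (card {S \<in> ?K. \<not> copy_free F E S})
      \<le> real (card (induced_copies F n E) * ((n - t) choose (k - t)))"
    using card_not_copy_free_le[OF F tk(1)] by (simp only: of_nat_le_iff)
  also have "\<dots> = real (card (induced_copies F n E)) * ?B"
    by simp
  also have "\<dots> \<le> \<eta> / X * real n ^ t * ?B"
    using few unfolding X_def by (rule mult_right_mono) simp
  also have "\<dots> = \<eta> / X * (?B * real n ^ t)"
    by simp
  also have "\<dots> \<le> \<eta> / X * (X * real (n choose k))"
    using binomial_diff_mult_pow_le[OF tk] \<open>0 \<le> \<eta>\<close> \<open>X \<noteq> 0\<close>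
    unfolding X_def by (intro mult_left_mono) auto
  also have "\<dots> = \<eta> * real (n choose k)"
    using \<open>X \<noteq> 0\<close> by simp
  finally have bad: "real (card {S \<in> ?K. \<not> copy_free F E S}) \<le> \<eta> * real (n choose k)" .
  have "{S \<in> ?K. copy_free F E S} \<union> {S \<in> ?K. \<not> copy_free F E S} = ?K" by blast
  then have "card {S \<in> ?K. copy_free F E S} + card {S \<in> ?K. \<not> copy_free F E S} = n choose k"
    using card_Un_disjoint[of "{S \<in> ?K. copy_free F E S}" "{S \<in> ?K. \<not> copy_free F E S}"]
    by (simp add: finite_imp_finite_nsets disjoint_iff)
  then show ?thesis
    using bad by (simp add: algebra_simps flip: of_nat_add)
qed

section \<open>Probability bounds\<close>

lemma expect_prod_copy_free_weights_le:
  assumes p: "0 \<le> p" "p \<le> 1" and rk: "r \<le> k" "k \<le> n" and "0 \<le> a"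
  defines "m \<equiv> (n - r) choose (k - r)"
  shows "expect_subset p (r_sets r n) (\<lambda>E. \<Prod>S\<in>nsets {0..<n} k. if copy_free F E S then a else 1)
           \<le> root m (1 + (a ^ m - 1) * gnp_prob r k p (free_family r F k)) ^ (n choose k)"
proof -
  define I where "I = r_sets r n"
  define K where "K = nsets {0..<n} k"
  define f where "f S E = (if copy_free F E S then a else 1)" for S :: "nat set" and E
  have "0 < m" using rk by (simp add: m_def)
  have "expect_subset p I (\<lambda>E. \<Prod>S\<in>K. f S E)
      \<le> (\<Prod>S\<in>K. root m (expect_subset p I (\<lambda>E. f S E ^ m)))"
  proof (rule finner_inequality[where T = Pow])
    show "card {S \<in> K. e \<in> Pow S} = m" if "e \<in> I" for e
    proof -
      have "e \<subseteq> {0..<n}" "card e = r" using that by (auto simp: I_def r_sets_def)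
      then show ?thesis
        using card_nsets_supersets[of "{0..<n}" e k] rk by (simp add: K_def m_def)
    qed
    show "depends_only_on (f S) (Pow S)" for S
      unfolding f_def by (rule depends_only_on_copy_free)
  qed (use p \<open>0 < m\<close> \<open>0 \<le> a\<close> in
    \<open>auto simp: I_def K_def f_def finite_imp_finite_nsets\<close>)
  also have "\<dots> = (\<Prod>S\<in>K. root m (1 + (a ^ m - 1) * gnp_prob r k p (free_family r F k)))"
  proof (rule prod.cong[OF refl])
    fix S assume "S \<in> K"
    have "expect_subset p I (\<lambda>E. f S E ^ m)
        = expect_subset p I (\<lambda>E. 1 + (a ^ m - 1) * of_bool (copy_free F E S))"
      by (intro expect_subset_cong) (simp add: f_def)
    also have "\<dots> = 1 + (a ^ m - 1) * gnp_prob r k p (free_family r F k)"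
      using \<open>S \<in> K\<close> expect_subset_copy_free[of S n k p r F]
      by (simp add: expect_subset_add expect_subset_cmult expect_subset_const I_def K_def nsets_def)
    finally show "root m (expect_subset p I (\<lambda>E. f S E ^ m))
        = root m (1 + (a ^ m - 1) * gnp_prob r k p (free_family r F k))" by simp
  qed
  finally show ?thesis by (simp add: I_def K_def f_def)
qed

lemma gnp_prob_le_if_many_copy_free:
  assumes p: "0 < p" "p < 1" and rk: "r \<le> k" "k \<le> n"
    and A: "A \<subseteq> Pow (r_sets r n)"
    and many: "\<And>E. E \<in> A \<Longrightarrow> X \<le> real (card {S \<in> nsets {0..<n} k. copy_free F E S})"
    and q: "q = gnp_prob r k p (free_family r F k)" "0 < q"
  defines "m \<equiv> (n - r) choose (k - r)"
  shows "gnp_prob r n p A \<le> 2 powr (real (n choose k) / real m) * q powr (X / real m)"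
proof -
  define K where "K = nsets {0..<n} k"
  \<comment> \<open>With a ^ m = 1 / q every factor of the weights has m-th moment 2 - q.\<close>
  define a where "a = q powr (- 1 / real m)"
  let ?weights = "\<lambda>E. \<Prod>S\<in>K. if copy_free F E S then a else 1"
  have "0 < m" using rk by (simp add: m_def)
  have "q \<le> 1" using q gnp_prob_le_1 p by simp
  have "0 < a" "1 \<le> a"
    using q(2) \<open>q \<le> 1\<close> \<open>0 < m\<close> by (simp_all add: a_def powr_minus_divide powr_le1)
  have "a ^ m = a powr real m"
    using \<open>0 < a\<close> by (simp add: powr_realpow)
  also have "\<dots> = q powr (- 1 / real m * real m)"
    by (simp only: a_def powr_powr)
  also have "\<dots> = 1 / q"
    using \<open>0 < m\<close> q(2) by (simp add: powr_minus_divide)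
  finally have "1 + (a ^ m - 1) * q = 2 - q"
    using q(2) by (simp add: left_diff_distrib)
  then have "expect_subset p (r_sets r n) ?weights \<le> root m (2 - q) ^ (n choose k)"
    using expect_prod_copy_free_weights_le[of p r k n a F] p rk \<open>0 < a\<close> q(1)
    by (simp add: K_def m_def)
  also have "\<dots> \<le> root m 2 ^ (n choose k)"
    using q(2) \<open>q \<le> 1\<close> \<open>0 < m\<close> by (intro power_mono) auto
  also have "\<dots> = 2 powr (real (n choose k) / real m)"
    using \<open>0 < m\<close> by (simp add: root_powr_inverse powr_realpow[symmetric] powr_powr)
  finally have upper: "expect_subset p (r_sets r n) ?weights \<le> 2 powr (real (n choose k) / real m)" .
  have "a powr X * gnp_prob r n p A = expect_subset p (r_sets r n) (\<lambda>E. a powr X * of_bool (E \<in> A))"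
    by (simp add: gnp_prob_eq_expect_subset expect_subset_cmult)
  also have "\<dots> \<le> expect_subset p (r_sets r n) ?weights"
  proof (rule expect_subset_mono)
    fix E
    have "?weights E = a ^ card {S \<in> K. copy_free F E S}"
      by (simp add: K_def prod.If_cases finite_imp_finite_nsets Int_def)
    moreover have "a powr X \<le> a ^ card {S \<in> K. copy_free F E S}" if "E \<in> A"
      using many[OF that] \<open>1 \<le> a\<close> \<open>0 < a\<close> by (simp add: K_def powr_realpow[symmetric] powr_mono)
    ultimately show "a powr X * of_bool (E \<in> A) \<le> ?weights E"
      using \<open>0 < a\<close> by auto
  qed (use p in auto)
  finally have "a powr X * gnp_prob r n p A \<le> 2 powr (real (n choose k) / real m)"
    using upper by linarith
  moreover have "a powr X = 1 / q powr (X / real m)"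
    unfolding a_def powr_powr by (simp add: powr_minus_divide)
  ultimately show ?thesis
    using q(2) by (simp add: field_simps)
qed

lemma c_seq_nonneg:
  assumes "0 \<le> p" "p \<le> 1"
  shows "0 \<le> c_seq r p F n"
proof -
  let ?q = "gnp_prob r n p (free_family r F n)"
  have "log 2 ?q \<le> 0"
  proof (cases "?q = 0")
    case True then show ?thesis by (simp add: log_def)
  next
    case False
    then have "0 < ?q" using gnp_prob_nonneg[OF assms] by (simp add: order_less_le)
    then show ?thesis using gnp_prob_le_1[OF assms] by simp
  qed
  then show ?thesis by (simp add: c_seq_def divide_nonpos_nonneg)
qed

lemma gnp_prob_le_c_seq:
  assumes p: "0 < p" "p < 1" and rk: "r \<le> k" "k \<le> n"
    and A: "A \<subseteq> Pow (r_sets r n)"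
    and many: "\<And>E. E \<in> A \<Longrightarrow> (1 - \<eta>) * real (n choose k)
                               \<le> real (card {S \<in> nsets {0..<n} k. copy_free F E S})"
  shows "gnp_prob r n p A
           \<le> 2 powr (real (n choose r) * (1 / real (k choose r) - (1 - \<eta>) * c_seq r p F k))"
proof -
  define q where "q = gnp_prob r k p (free_family r F k)"
  define b where "b = real (k choose r)"
  define m where "m = real ((n - r) choose (k - r))"
  have "0 < b" "0 < m"
    using rk by (simp_all add: b_def m_def)
  have ratio: "real (n choose k) / m = real (n choose r) / b"
    using choose_mult[OF rk] \<open>0 < b\<close> \<open>0 < m\<close>
    by (simp add: b_def m_def field_simps flip: of_nat_mult)
  show ?thesis
  proof (cases "q = 0")
    case True
    \<comment> \<open>Since log 2 0 = 0, c_seq vanishes here and the bound is trivial.\<close>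
    then have "c_seq r p F k = 0" by (simp add: c_seq_def q_def log_def)
    then have "1 \<le> 2 powr (real (n choose r) * (1 / real (k choose r) - (1 - \<eta>) * c_seq r p F k))"
      by (intro ge_one_powr_ge_zero) auto
    then show ?thesis using gnp_prob_le_1[of p r n A] p by linarith
  next
    case False
    then have "0 < q" using gnp_prob_nonneg[of p r k] p q_def by (simp add: order_less_le)
    have "q = 2 powr (- c_seq r p F k * b)"
      using \<open>0 < q\<close> \<open>0 < b\<close> by (simp add: c_seq_def q_def b_def)
    then have "q powr ((1 - \<eta>) * real (n choose k) / m)
        = 2 powr (- c_seq r p F k * b * ((1 - \<eta>) * (real (n choose r) / b)))"
      by (simp add: powr_powr flip: ratio)
    also have "\<dots> = 2 powr (- c_seq r p F k * (1 - \<eta>) * real (n choose r))"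
      using \<open>0 < b\<close> by (simp add: mult.assoc)
    finally have "q powr ((1 - \<eta>) * real (n choose k) / m)
        = 2 powr (- c_seq r p F k * (1 - \<eta>) * real (n choose r))" .
    moreover have "gnp_prob r n p A
        \<le> 2 powr (real (n choose k) / m) * q powr ((1 - \<eta>) * real (n choose k) / m)"
      unfolding m_def using gnp_prob_le_if_many_copy_free[OF p rk A many q_def \<open>0 < q\<close>] .
    ultimately show ?thesis
      by (simp add: ratio b_def algebra_simps flip: powr_add)
  qed
qed

lemma inverse_binomial_le:
  assumes "1 \<le> r" "r \<le> k"
  shows "1 / real (k choose r) \<le> real r / real k"
proof -
  have "real k / real r \<le> (real k / real r) ^ r"
    using assms by (intro self_le_power) auto
  also have "\<dots> \<le> real (k choose r)"
    using binomial_ge_n_over_k_pow_k[of r k] assms by simp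
  finally show ?thesis
    using assms by (simp add: field_simps)
qed

lemma exists_block_size:
  assumes "1 \<le> r" "0 \<le> p" "p \<le> 1" and c: "c_seq r p F \<longlonglongrightarrow> c" and "0 < \<epsilon>"
  shows "\<exists>k \<eta>. r \<le> k \<and> t \<le> k \<and> 0 < \<eta> \<and>
           1 / real (k choose r) - (1 - \<eta>) * c_seq r p F k \<le> - c + \<epsilon>"
proof -
  have "0 \<le> c" using c c_seq_nonneg assms(2,3) by (intro LIMSEQ_le_const) auto
  obtain K0 where K0: "\<And>k. K0 \<le> k \<Longrightarrow> \<bar>c_seq r p F k - c\<bar> < \<epsilon> / 4"
    using LIMSEQ_D[OF c, of "\<epsilon> / 4"] \<open>0 < \<epsilon>\<close> by auto
  define k where "k = max K0 (max r (max t (nat \<lceil>4 * real r / \<epsilon>\<rceil>)))"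
  have k: "r \<le> k" "t \<le> k" "\<bar>c_seq r p F k - c\<bar> < \<epsilon> / 4"
    using K0 by (auto simp: k_def)
  have "4 * real r / \<epsilon> \<le> real k"
    unfolding k_def by linarith
  then have "real r / real k \<le> \<epsilon> / 4"
    using assms(1) k(1) \<open>0 < \<epsilon>\<close> by (simp add: field_simps)
  moreover have "1 / real (k choose r) \<le> real r / real k"
    using assms(1) k(1) by (rule inverse_binomial_le)
  ultimately have "1 / real (k choose r) \<le> \<epsilon> / 4"
    by linarith
  define \<eta> where "\<eta> = \<epsilon> / (4 * (c + \<epsilon>))"
  have "0 < \<eta>" using \<open>0 < \<epsilon>\<close> \<open>0 \<le> c\<close> by (simp add: \<eta>_def)
  have "c_seq r p F k \<le> c + \<epsilon>" using k(3) \<open>0 < \<epsilon>\<close> by linarith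
  then have "\<eta> * c_seq r p F k \<le> \<eta> * (c + \<epsilon>)"
    using \<open>0 < \<eta>\<close> by (intro mult_left_mono) auto
  also have "\<dots> = \<epsilon> / 4"
    using \<open>0 < \<epsilon>\<close> \<open>0 \<le> c\<close>
    by (simp add: \<eta>_def field_simps add_nonneg_pos[THEN less_imp_neq, symmetric])
  finally have "\<eta> * c_seq r p F k \<le> \<epsilon> / 4" .
  moreover have "(1 - \<eta>) * c_seq r p F k = c_seq r p F k - \<eta> * c_seq r p F k"
    by (simp add: algebra_simps)
  ultimately have "1 / real (k choose r) - (1 - \<eta>) * c_seq r p F k \<le> - c + \<epsilon>"
    using \<open>1 / real (k choose r) \<le> \<epsilon> / 4\<close> k(3) by linarith
  then show ?thesis using k \<open>0 < \<eta>\<close> by blast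
qed

lemma many_copies_if_likely:
  assumes F: "\<And>V H. (V, H) \<in> F \<Longrightarrow> t \<le> card V" and p: "0 < p" "p < 1"
    and k: "r \<le> k" "t \<le> k" "k \<le> n" and "0 \<le> \<eta>" and A: "A \<subseteq> Pow (r_sets r n)"
    and exponent: "1 / real (k choose r) - (1 - \<eta>) * c_seq r p F k \<le> e"
    and likely: "2 powr (e * real (n choose r)) < gnp_prob r n p A"
  shows "\<exists>E\<in>A. \<eta> / (real k * real t) ^ t * real n ^ t \<le> real (card (induced_copies F n E))"
proof (rule ccontr)
  assume "\<not> ?thesis"
  then have "(1 - \<eta>) * real (n choose k) \<le> real (card {S \<in> nsets {0..<n} k. copy_free F E S})"
    if "E \<in> A" for E
    using that k \<open>0 \<le> \<eta>\<close> by (intro card_copy_free_ge[OF F]) auto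
  then have "gnp_prob r n p A
      \<le> 2 powr (real (n choose r) * (1 / real (k choose r) - (1 - \<eta>) * c_seq r p F k))"
    by (intro gnp_prob_le_c_seq[OF p k(1,3) A])
  also have "\<dots> \<le> 2 powr (e * real (n choose r))"
    using mult_right_mono[OF exponent, of "real (n choose r)"] by (simp add: mult.commute)
  finally show False using likely by simp
qed

theorem theorem2:
  fixes r t :: nat and p c :: real and F :: "(nat set \<times> nat set set) set"
  assumes r: "r \<ge> 2"
    and F: "\<forall>(V, H)\<in>F. uniform_hg r V H \<and> card V \<ge> t"
    and p: "0 < p" "p < 1"
    and c: "c_seq r p F \<longlonglongrightarrow> c"
  shows "\<forall>\<epsilon>>0. \<exists>n0::nat. \<exists>\<delta>>0::real. \<forall>n>n0. \<forall>A.
           A \<subseteq> Pow (r_sets r n) \<longrightarrow>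
           gnp_prob r n p A > 2 powr ((- c + \<epsilon>) * real (n choose r)) \<longrightarrow>
           (\<exists>E\<in>A. real (card (induced_copies F n E)) \<ge> \<delta> * real n ^ t)"
proof (intro allI impI)
  fix \<epsilon> :: real assume "\<epsilon> > 0"
  obtain k \<eta> where k: "r \<le> k" "t \<le> k" and "0 < \<eta>"
    and exponent: "1 / real (k choose r) - (1 - \<eta>) * c_seq r p F k \<le> - c + \<epsilon>"
    using exists_block_size[OF _ _ _ c \<open>\<epsilon> > 0\<close>] r p by fastforce
  define \<delta> where "\<delta> = \<eta> / (real k * real t) ^ t"
  have "0 < \<delta>" using \<open>0 < \<eta>\<close> k by (cases "t = 0") (auto simp: \<delta>_def)
  moreover have "\<exists>E\<in>A. \<delta> * real n ^ t \<le> real (card (induced_copies F n E))"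
    if "k < n" "A \<subseteq> Pow (r_sets r n)" "2 powr ((- c + \<epsilon>) * real (n choose r)) < gnp_prob r n p A"
    for n A
    using that k \<open>0 < \<eta>\<close> F exponent unfolding \<delta>_def
    by (intro many_copies_if_likely[OF _ p]) auto
  ultimately show "\<exists>n0::nat. \<exists>\<delta>>0::real. \<forall>n>n0. \<forall>A. A \<subseteq> Pow (r_sets r n) \<longrightarrow>
      gnp_prob r n p A > 2 powr ((- c + \<epsilon>) * real (n choose r)) \<longrightarrow>
      (\<exists>E\<in>A. real (card (induced_copies F n E)) \<ge> \<delta> * real n ^ t)"
    by blast
qed

end
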